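(* If $P_1$ and $P_2$ are disjoint signed posets then $Y_{P_1\sqcup P_2}=Y_{P_1}Y_{P_2}$; consequently $\mathbb{Y}$ is closed under multiplication and $\phi(fg)=\phi(f)\phi(g)$ for all $f,g\in\mathbb{Y}$.
   Context: A signed graph is a finite graph (loops and multiple edges allowed) with $\mathrm{sgn}:E\to\{+,-\}$; a coloring $\kappa:V\to\mathbb{Z}$ is proper if $\kappa(u)\ne\mathrm{sgn}(e)\kappa(v)$ for every edge $e$ with endpoints $u,v$. An orientation assigns to each half-edge (a loop has two) an arrow toward or away from the vertex, such that on a positive edge exactly one of the two arrows points toward its vertex and on a negative edge both point toward or both point away. A cycle is a closed walk in which, considering only the edges of the walk, every vertex of the walk has at least one arrow pointing into it and one pointing out of it; an orientation is acyclic if it has no cycle; a sink is a vertex all of whose incident arrows point toward it (an isolated vertex is a sink). A signed poset is an acyclic orientation $P$ of a signed graph; $P_1\sqcup P_2$ denotes the orientation of the disjoint union. A proper coloring $\kappa$ preserves $P$ if for every edge $e$ and each endpoint $v$ of $e$, with $u$ the other endpoint ($u=v$ for a loop), the arrow of $P$ at the incidence of $e$ with $v$ points toward $v$ iff $\kappa(v)>\mathrm{sgn}(e)\kappa(u)$. $Y_P=\sum_\kappa\prod_v x_{\kappa(v)}$ over proper colorings preserving $P$ (variables $x_i$, $i\in\mathbb{Z}$); $\mathbb{Y}$ is the $\mathbb{Q}$-span of all $Y_P$; $\phi:\mathbb{Y}\to\mathbb{Q}[t]$ is the (unique) $\mathbb{Q}$-linear map with $\phi(Y_P)=t^{\mathrm{sink}(P)}$,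 $\mathrm{sink}(P)$ being the number of sinks of $P$ (its existence is established in the paper). *)

theory Defs
  imports Main "HOL-Library.Multiset" "HOL-Library.FuncSet" "HOL-Computational_Algebra.Polynomial"
begin

text \<open>An oriented signed graph (loops and multiple edges allowed).
  Each edge e has two half-edges (e, True) and (e, False); their vertices are
  fst (sp_ends e) and snd (sp_ends e) (equal for a loop).
  sp_pos e: the sign of e is positive.
  sp_arr e b: the arrow at half-edge (e,b) points toward its vertex.\<close>
record ('v, 'e) spos =
  sp_verts :: "'v set"
  sp_edges :: "'e set"
  sp_ends :: "'e \<Rightarrow> 'v \<times> 'v"
  sp_pos :: "'e \<Rightarrow> bool"
  sp_arr :: "'e \<Rightarrow> bool \<Rightarrow> bool"

definition endpt :: "('v, 'e) spos \<Rightarrow> 'e \<Rightarrow> bool \<Rightarrow> 'v" where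
  "endpt P e b = (if b then fst (sp_ends P e) else snd (sp_ends P e))"

definition sgnval :: "('v, 'e) spos \<Rightarrow> 'e \<Rightarrow> int" where
  "sgnval P e = (if sp_pos P e then 1 else -1)"

text \<open>A closed walk: a nonempty list of steps (e,b), traversing e from endpt e b
  to endpt e (\<not>b), consecutive steps (cyclically) matching up.\<close>
definition closed_walk :: "('v, 'e) spos \<Rightarrow> ('e \<times> bool) list \<Rightarrow> bool" where
  "closed_walk P w \<longleftrightarrow> w \<noteq> [] \<and> (\<forall>(e,b)\<in>set w. e \<in> sp_edges P) \<and>
     (\<forall>i<length w. endpt P (fst (w ! i)) (\<not> snd (w ! i))
                 = endpt P (fst (w ! ((i + 1) mod length w))) (snd (w ! ((i + 1) mod length w))))"

definition is_cycle :: "('v, 'e) spos \<Rightarrow> ('e \<times> bool) list \<Rightarrow> bool" where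
  "is_cycle P w \<longleftrightarrow> closed_walk P w \<and>
     (\<forall>v \<in> {endpt P e b | e b. (e, b) \<in> set w}.
        (\<exists>e\<in>fst ` set w. \<exists>c. endpt P e c = v \<and> sp_arr P e c) \<and>
        (\<exists>e\<in>fst ` set w. \<exists>c. endpt P e c = v \<and> \<not> sp_arr P e c))"

definition signed_poset :: "('v, 'e) spos \<Rightarrow> bool" where
  "signed_poset P \<longleftrightarrow> finite (sp_verts P) \<and> finite (sp_edges P) \<and>
     (\<forall>e\<in>sp_edges P. fst (sp_ends P e) \<in> sp_verts P \<and> snd (sp_ends P e) \<in> sp_verts P) \<and>
     (\<forall>e\<in>sp_edges P. if sp_pos P e then sp_arr P e True \<noteq> sp_arr P e False
                                   else sp_arr P e True = sp_arr P e False) \<and>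
     (\<nexists>w. is_cycle P w)"

definition sinks :: "('v, 'e) spos \<Rightarrow> nat" where
  "sinks P = card {v \<in> sp_verts P. \<forall>e\<in>sp_edges P. \<forall>b. endpt P e b = v \<longrightarrow> sp_arr P e b}"

definition proper_col :: "('v, 'e) spos \<Rightarrow> ('v \<Rightarrow> int) \<Rightarrow> bool" where
  "proper_col P \<kappa> \<longleftrightarrow> (\<forall>e\<in>sp_edges P. \<kappa> (endpt P e True) \<noteq> sgnval P e * \<kappa> (endpt P e False))"

definition preserves :: "('v, 'e) spos \<Rightarrow> ('v \<Rightarrow> int) \<Rightarrow> bool" where
  "preserves P \<kappa> \<longleftrightarrow> (\<forall>e\<in>sp_edges P. \<forall>b.
      sp_arr P e b \<longleftrightarrow> \<kappa> (endpt P e b) > sgnval P e * \<kappa> (endpt P e (\<not> b)))"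

text \<open>Formal power series in the variables x_i (i :: int): coefficient of each monomial,
  a monomial being a finite multiset of indices.\<close>
type_synonym fps_Z = "int multiset \<Rightarrow> rat"

definition ps_mult :: "fps_Z \<Rightarrow> fps_Z \<Rightarrow> fps_Z" where
  "ps_mult f g = (\<lambda>m. \<Sum>m1\<in>{m1. m1 \<subseteq># m}. f m1 * g (m - m1))"

definition Ysp :: "('v, 'e) spos \<Rightarrow> fps_Z" where
  "Ysp P = (\<lambda>m. of_nat (card {\<kappa> \<in> sp_verts P \<rightarrow>\<^sub>E (UNIV :: int set).
        proper_col P \<kappa> \<and> preserves P \<kappa> \<and> image_mset \<kappa> (mset_set (sp_verts P)) = m}))"

definition disj_union :: "('v, 'e) spos \<Rightarrow> ('v, 'e) spos \<Rightarrow> ('v, 'e) spos" where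
  "disj_union P1 P2 = \<lparr> sp_verts = sp_verts P1 \<union> sp_verts P2,
     sp_edges = sp_edges P1 \<union> sp_edges P2,
     sp_ends = (\<lambda>e. if e \<in> sp_edges P1 then sp_ends P1 e else sp_ends P2 e),
     sp_pos = (\<lambda>e. if e \<in> sp_edges P1 then sp_pos P1 e else sp_pos P2 e),
     sp_arr = (\<lambda>e. if e \<in> sp_edges P1 then sp_arr P1 e else sp_arr P2 e) \<rparr>"

text \<open>The Q-span of all Y_P (signed posets realised on vertex/edge type nat;
  every finite signed poset is isomorphic to one of these).\<close>
definition YY :: "fps_Z set" where
  "YY = {f. \<exists>cs :: (rat \<times> (nat, nat) spos) list. (\<forall>(c, P)\<in>set cs. signed_poset P) \<and>
            f = (\<lambda>m. \<Sum>(c, P)\<leftarrow>cs. c * Ysp P m)}"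

definition phi_spec :: "(fps_Z \<Rightarrow> rat poly) \<Rightarrow> bool" where
  "phi_spec \<phi> \<longleftrightarrow>
     (\<forall>f\<in>YY. \<forall>g\<in>YY. \<forall>a b. \<phi> (\<lambda>m. a * f m + b * g m) = smult a (\<phi> f) + smult b (\<phi> g)) \<and>
     (\<forall>P :: (nat, nat) spos. signed_poset P \<longrightarrow> \<phi> (Ysp P) = monom 1 (sinks P))"

end

theory Submission
  imports Defs
begin

text \<open>
  Every edge of \<open>P\<^sub>1 \<sqcup> P\<^sub>2\<close> lies in one part, and a closed walk cannot change parts; so
  \<open>P\<^sub>1 \<sqcup> P\<^sub>2\<close> is again acyclic, its sinks are those of \<open>P\<^sub>1\<close> and of \<open>P\<^sub>2\<close>, and its
  preserving proper colorings are exactly the pairs of preserving proper colorings of the two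
  parts, the monomial of a pair being the product of the two monomials. Summing over all ways
  of splitting a monomial gives \<open>Y(P\<^sub>1 \<sqcup> P\<^sub>2) = Y(P\<^sub>1) Y(P\<^sub>2)\<close>.
  Injective relabelling changes neither \<open>Y(P)\<close> nor the number of sinks, so by bilinearity the
  product of two combinations of \<open>Y(P)\<close>'s is the combination of the \<open>Y\<close>'s of disjoint unions
  of relabelled copies, and \<open>\<phi>\<close> is multiplicative because \<open>t\<^bsup>sink(P\<^sub>1 \<sqcup> P\<^sub>2)\<^esup> = t\<^bsup>sink(P\<^sub>1)\<^esup> t\<^bsup>sink(P\<^sub>2)\<^esup>\<close>.
\<close>

lemma finite_subsets_mset: "finite {N. N \<subseteq># M}"
proof (induction M)
  case empty
  then show ?case by simp
next
  case (add a M)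
  have "{N. N \<subseteq># add_mset a M} \<subseteq> {N. N \<subseteq># M} \<union> add_mset a ` {N. N \<subseteq># M}"
  proof
    fix N assume N: "N \<in> {N. N \<subseteq># add_mset a M}"
    show "N \<in> {N. N \<subseteq># M} \<union> add_mset a ` {N. N \<subseteq># M}"
    proof (cases "a \<in># N")
      case True
      then obtain N' where "N = add_mset a N'" by (blast dest: multi_member_split)
      then show ?thesis using N by auto
    next
      case False
      then show ?thesis using N by (simp add: inter_add_left1 subset_mset.inf.absorb_iff2)
    qed
  qed
  then show ?case using add.IH by (auto intro: finite_subset)
qed

lemma card_additive_fibre_eq_convolution:
  fixes wa :: "'a \<Rightarrow> 'c multiset" and wb :: "'b \<Rightarrow> 'c multiset"
  assumes "\<And>n. finite {a \<in> A. wa a = n}" and "\<And>n. finite {b \<in> B. wb b = n}"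
  shows "card {p \<in> A \<times> B. wa (fst p) + wb (snd p) = m} =
    (\<Sum>n\<in>{n. n \<subseteq># m}. card {a \<in> A. wa a = n} * card {b \<in> B. wb b = m - n})"
proof -
  have "{p \<in> A \<times> B. wa (fst p) + wb (snd p) = m} =
      (\<Union>n\<in>{n. n \<subseteq># m}. {a \<in> A. wa a = n} \<times> {b \<in> B. wb b = m - n})"
    by auto
  also have "card \<dots> = (\<Sum>n\<in>{n. n \<subseteq># m}. card ({a \<in> A. wa a = n} \<times> {b \<in> B. wb b = m - n}))"
    using assms by (intro card_UN_disjoint finite_subsets_mset) auto
  finally show ?thesis by (simp add: card_cartesian_product)
qed

lemma bij_betw_card_fibres:
  assumes "bij_betw f A B" and "\<And>a. a \<in> A \<Longrightarrow> wb (f a) = wa a"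
  shows "card {a \<in> A. wa a = m} = card {b \<in> B. wb b = m}"
proof (rule bij_betw_same_card, rule bij_betw_subset[OF assms(1)])
  show "{a \<in> A. wa a = m} \<subseteq> A" by auto
  show "f ` {a \<in> A. wa a = m} = {b \<in> B. wb b = m}"
    using assms by (auto simp: bij_betw_def)
qed

lemma sum_list_mult_sum_list:
  fixes f :: "'a \<Rightarrow> 'c::semiring_0"
  shows "(\<Sum>x\<leftarrow>xs. f x) * (\<Sum>y\<leftarrow>ys. g y) = (\<Sum>x\<leftarrow>xs. \<Sum>y\<leftarrow>ys. f x * g y)"
  by (induction xs) (simp_all add: distrib_right sum_list_const_mult)

lemma endpt_in_verts: "signed_poset P \<Longrightarrow> e \<in> sp_edges P \<Longrightarrow> endpt P e b \<in> sp_verts P"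
  unfolding signed_poset_def endpt_def by auto

lemma proper_col_cong:
  "(\<And>e b. e \<in> sp_edges P \<Longrightarrow> \<kappa> (endpt P e b) = \<kappa>' (endpt P e b)) \<Longrightarrow>
    proper_col P \<kappa> = proper_col P \<kappa>'"
  unfolding proper_col_def by simp

lemma preserves_cong:
  "(\<And>e b. e \<in> sp_edges P \<Longrightarrow> \<kappa> (endpt P e b) = \<kappa>' (endpt P e b)) \<Longrightarrow>
    preserves P \<kappa> = preserves P \<kappa>'"
  unfolding preserves_def by simp

definition colorings :: "('v, 'e) spos \<Rightarrow> ('v \<Rightarrow> int) set" where
  "colorings P = {\<kappa> \<in> sp_verts P \<rightarrow>\<^sub>E UNIV. proper_col P \<kappa> \<and> preserves P \<kappa>}"

definition monomial :: "'v set \<Rightarrow> ('v \<Rightarrow> int) \<Rightarrow> int multiset" where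
  "monomial V \<kappa> = image_mset \<kappa> (mset_set V)"

lemma Ysp_eq_card_colorings:
  "Ysp P m = of_nat (card {\<kappa> \<in> colorings P. monomial (sp_verts P) \<kappa> = m})"
  unfolding Ysp_def colorings_def monomial_def by simp

lemma monomial_restrict: "finite V \<Longrightarrow> monomial V (restrict \<kappa> V) = monomial V \<kappa>"
  unfolding monomial_def by (auto intro: image_mset_cong)

lemma monomial_image: "inj_on h V \<Longrightarrow> monomial (h ` V) \<kappa> = monomial V (\<kappa> \<circ> h)"
  by (simp add: monomial_def image_mset_mset_set[symmetric] multiset.map_comp)

lemma monomial_Un:
  "finite A \<Longrightarrow> finite B \<Longrightarrow> A \<inter> B = {} \<Longrightarrow> monomial (A \<union> B) \<kappa> = monomial A \<kappa> + monomial B \<kappa>"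
  by (simp add: monomial_def mset_set_Union)

lemma finite_colorings_with_monomial:
  assumes "finite (sp_verts P)"
  shows "finite {\<kappa> \<in> colorings P. monomial (sp_verts P) \<kappa> = m}"
proof (rule finite_subset)
  show "{\<kappa> \<in> colorings P. monomial (sp_verts P) \<kappa> = m} \<subseteq> sp_verts P \<rightarrow>\<^sub>E set_mset m"
    using assms by (auto simp: colorings_def monomial_def)
  show "finite (sp_verts P \<rightarrow>\<^sub>E set_mset m)"
    using assms by (simp add: finite_PiE)
qed

lemma restrict_in_colorings:
  assumes "signed_poset P"
  shows "restrict \<kappa> (sp_verts P) \<in> colorings P \<longleftrightarrow> proper_col P \<kappa> \<and> preserves P \<kappa>"
proof -
  have "proper_col P (restrict \<kappa> (sp_verts P)) = proper_col P \<kappa>"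
    and "preserves P (restrict \<kappa> (sp_verts P)) = preserves P \<kappa>"
    by (auto intro!: proper_col_cong preserves_cong simp: endpt_in_verts[OF assms])
  then show ?thesis by (simp add: colorings_def)
qed

definition sink_verts :: "('v, 'e) spos \<Rightarrow> 'v set" where
  "sink_verts P = {v \<in> sp_verts P. \<forall>e\<in>sp_edges P. \<forall>b. endpt P e b = v \<longrightarrow> sp_arr P e b}"

lemma sinks_eq_card_sink_verts: "sinks P = card (sink_verts P)"
  by (simp add: sinks_def sink_verts_def)

lemma is_cycle_map:
  assumes cycle: "is_cycle Q w"
    and hom: "\<And>e b. (e, b) \<in> set w \<Longrightarrow>
      g e \<in> sp_edges R \<and> sp_arr R (g e) = sp_arr Q e \<and> (\<forall>c. endpt R (g e) c = h (endpt Q e c))"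
  shows "is_cycle R (map (apfst g) w)"
proof -
  let ?w = "map (apfst g) w"
  have walk: "closed_walk Q w" using cycle by (simp add: is_cycle_def)
  have hom': "g e \<in> sp_edges R \<and> sp_arr R (g e) = sp_arr Q e \<and> (\<forall>c. endpt R (g e) c = h (endpt Q e c))"
    if "e \<in> fst ` set w" for e
    using that hom by force
  have "closed_walk R ?w"
    unfolding closed_walk_def
  proof (intro conjI allI impI)
    show "?w \<noteq> []" using walk by (simp add: closed_walk_def)
    show "\<forall>(e, b)\<in>set ?w. e \<in> sp_edges R" using hom by auto
  next
    fix i assume "i < length ?w"
    then have i: "i < length w" by simp
    then have j: "(i + 1) mod length w < length w" by (intro mod_less_divisor) linarith
    have "endpt Q (fst (w ! i)) (\<not> snd (w ! i)) =
        endpt Q (fst (w ! ((i + 1) mod length w))) (snd (w ! ((i + 1) mod length w)))"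
      using walk i by (simp add: closed_walk_def)
    then show "endpt R (fst (?w ! i)) (\<not> snd (?w ! i)) =
        endpt R (fst (?w ! ((i + 1) mod length ?w))) (snd (?w ! ((i + 1) mod length ?w)))"
      using hom'[of "fst (w ! i)"] hom'[of "fst (w ! ((i + 1) mod length w))"] i j
      by (simp add: apfst_def map_prod_def split_beta)
  qed
  moreover have "(\<exists>e\<in>fst ` set ?w. \<exists>c. endpt R e c = v \<and> sp_arr R e c) \<and>
      (\<exists>e\<in>fst ` set ?w. \<exists>c. endpt R e c = v \<and> \<not> sp_arr R e c)"
    if vertex: "v \<in> {endpt R e b | e b. (e, b) \<in> set ?w}" for v
  proof -
    obtain e b where eb: "(e, b) \<in> set w" and v: "v = h (endpt Q e b)"
      using vertex hom by fastforce
    then have "endpt Q e b \<in> {endpt Q e b | e b. (e, b) \<in> set w}" by blast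
    then obtain e1 c1 e2 c2 where
      "e1 \<in> fst ` set w" "endpt Q e1 c1 = endpt Q e b" "sp_arr Q e1 c1"
      "e2 \<in> fst ` set w" "endpt Q e2 c2 = endpt Q e b" "\<not> sp_arr Q e2 c2"
      using cycle unfolding is_cycle_def by meson
    moreover have "fst ` set ?w = g ` fst ` set w" by (simp add: image_image)
    ultimately show ?thesis using hom'[of e1] hom'[of e2] v by (metis imageI)
  qed
  ultimately show ?thesis unfolding is_cycle_def by blast
qed

lemma closed_walk_within:
  assumes walk: "closed_walk Q w" and start: "fst (w ! 0) \<in> F"
    and inside: "\<And>e b. e \<in> F \<Longrightarrow> endpt Q e b \<in> A"
    and outside: "\<And>e b. e \<in> sp_edges Q - F \<Longrightarrow> endpt Q e b \<notin> A"
  shows "fst ` set w \<subseteq> F"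
proof -
  have "fst (w ! i) \<in> F" if "i < length w" for i
    using that
  proof (induction i)
    case 0
    then show ?case using start by simp
  next
    case (Suc i)
    then have "Suc i mod length w = Suc i" by simp
    then have "endpt Q (fst (w ! i)) (\<not> snd (w ! i)) = endpt Q (fst (w ! Suc i)) (snd (w ! Suc i))"
      using walk Suc.prems unfolding closed_walk_def by (metis Suc_eq_plus1 Suc_lessD)
    moreover have "fst (w ! Suc i) \<in> sp_edges Q"
      using walk Suc.prems nth_mem unfolding closed_walk_def by fastforce
    ultimately show ?case using Suc inside outside by (metis Diff_iff Suc_lessD)
  qed
  then show ?thesis by (force simp: in_set_conv_nth)
qed

section \<open>Disjoint unions\<close>

lemma disj_union_simps [simp]:
  "sp_verts (disj_union P1 P2) = sp_verts P1 \<union> sp_verts P2"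
  "sp_edges (disj_union P1 P2) = sp_edges P1 \<union> sp_edges P2"
  by (simp_all add: disj_union_def)

lemma disj_union_left:
  assumes "e \<in> sp_edges P1"
  shows "endpt (disj_union P1 P2) e = endpt P1 e" "sgnval (disj_union P1 P2) e = sgnval P1 e"
    "sp_arr (disj_union P1 P2) e = sp_arr P1 e"
  using assms by (simp_all add: disj_union_def endpt_def sgnval_def fun_eq_iff)

lemma disj_union_right:
  assumes "sp_edges P1 \<inter> sp_edges P2 = {}" and "e \<in> sp_edges P2"
  shows "endpt (disj_union P1 P2) e = endpt P2 e" "sgnval (disj_union P1 P2) e = sgnval P2 e"
    "sp_arr (disj_union P1 P2) e = sp_arr P2 e"
  using assms by (auto simp add: disj_union_def endpt_def sgnval_def fun_eq_iff)

lemma proper_col_disj_union: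
  "sp_edges P1 \<inter> sp_edges P2 = {} \<Longrightarrow>
    proper_col (disj_union P1 P2) \<kappa> \<longleftrightarrow> proper_col P1 \<kappa> \<and> proper_col P2 \<kappa>"
  by (simp add: proper_col_def ball_Un disj_union_left disj_union_right)

lemma preserves_disj_union:
  "sp_edges P1 \<inter> sp_edges P2 = {} \<Longrightarrow>
    preserves (disj_union P1 P2) \<kappa> \<longleftrightarrow> preserves P1 \<kappa> \<and> preserves P2 \<kappa>"
  by (simp add: preserves_def ball_Un disj_union_left disj_union_right)

context
  fixes P1 P2 :: "('v, 'e) spos"
  assumes poset1: "signed_poset P1" and poset2: "signed_poset P2"
    and disjoint_verts: "sp_verts P1 \<inter> sp_verts P2 = {}"
    and disjoint_edges: "sp_edges P1 \<inter> sp_edges P2 = {}"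
begin

lemma disj_union_component:
  assumes "P \<in> {P1, P2}"
  shows "signed_poset P"
    and "e \<in> sp_edges P \<Longrightarrow> endpt (disj_union P1 P2) e = endpt P e \<and> sp_arr (disj_union P1 P2) e = sp_arr P e"
    and "e \<in> sp_edges (disj_union P1 P2) \<Longrightarrow> endpt (disj_union P1 P2) e b \<in> sp_verts P \<Longrightarrow> e \<in> sp_edges P"
  using assms poset1 poset2 disjoint_verts disjoint_edges
  by (auto simp: disj_union_left disj_union_right dest: endpt_in_verts[where b = b])

lemma disj_union_no_cycle: "\<not> is_cycle (disj_union P1 P2) w"
proof
  let ?U = "disj_union P1 P2"
  assume cycle: "is_cycle ?U w"
  then have walk: "closed_walk ?U w" by (simp add: is_cycle_def)
  then have "fst (w ! 0) \<in> sp_edges ?U"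
    by (cases w) (auto simp: closed_walk_def)
  then obtain P where P: "P \<in> {P1, P2}" and start: "fst (w ! 0) \<in> sp_edges P" by auto
  note comp = disj_union_component[OF P]
  have edges: "fst ` set w \<subseteq> sp_edges P"
  proof (rule closed_walk_within[OF walk start])
    fix e b assume "e \<in> sp_edges P"
    then show "endpt ?U e b \<in> sp_verts P" using comp(1,2) endpt_in_verts by metis
  next
    fix e b assume "e \<in> sp_edges ?U - sp_edges P"
    then show "endpt ?U e b \<notin> sp_verts P" using comp(3) by blast
  qed
  have "is_cycle P (map (apfst id) w)"
  proof (rule is_cycle_map[OF cycle])
    fix e b assume "(e, b) \<in> set w"
    then have "e \<in> sp_edges P" using edges by force
    then show "id e \<in> sp_edges P \<and> sp_arr P (id e) = sp_arr ?U e \<and> (\<forall>c. endpt P (id e) c = id (endpt ?U e c))"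
      using comp(2) by simp
  qed
  then show False using comp(1) by (simp add: signed_poset_def)
qed

lemma signed_poset_disj_union: "signed_poset (disj_union P1 P2)"
proof -
  have "\<forall>e\<in>sp_edges (disj_union P1 P2). fst (sp_ends (disj_union P1 P2) e) \<in> sp_verts (disj_union P1 P2) \<and>
      snd (sp_ends (disj_union P1 P2) e) \<in> sp_verts (disj_union P1 P2)"
    and "\<forall>e\<in>sp_edges (disj_union P1 P2). if sp_pos (disj_union P1 P2) e
      then sp_arr (disj_union P1 P2) e True \<noteq> sp_arr (disj_union P1 P2) e False
      else sp_arr (disj_union P1 P2) e True = sp_arr (disj_union P1 P2) e False"
    using poset1 poset2 disjoint_edges unfolding signed_poset_def by (auto simp: disj_union_def)
  then show ?thesis
    using poset1 poset2 disj_union_no_cycle unfolding signed_poset_def by simp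
qed

lemma sinks_disj_union: "sinks (disj_union P1 P2) = sinks P1 + sinks P2"
proof -
  have component: "v \<in> sink_verts (disj_union P1 P2) \<longleftrightarrow> v \<in> sink_verts P"
    if "P \<in> {P1, P2}" and "v \<in> sp_verts P" for P v
  proof -
    note comp = disj_union_component[OF \<open>P \<in> {P1, P2}\<close>]
    have "sp_edges P \<subseteq> sp_edges (disj_union P1 P2)" using that(1) by auto
    then have "(\<forall>e\<in>sp_edges (disj_union P1 P2). \<forall>b. endpt (disj_union P1 P2) e b = v \<longrightarrow> sp_arr (disj_union P1 P2) e b)
        \<longleftrightarrow> (\<forall>e\<in>sp_edges P. \<forall>b. endpt P e b = v \<longrightarrow> sp_arr P e b)"
      using comp(2,3) that(2) by (smt (verit) subsetD)
    then show ?thesis using that unfolding sink_verts_def by auto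
  qed
  have "sink_verts (disj_union P1 P2) = sink_verts P1 \<union> sink_verts P2"
    using component[of P1] component[of P2] by (auto simp: sink_verts_def)
  moreover have "finite (sink_verts P1)" "finite (sink_verts P2)"
    using poset1 poset2 by (auto simp: signed_poset_def sink_verts_def)
  moreover have "sink_verts P1 \<inter> sink_verts P2 = {}"
    using disjoint_verts by (auto simp: sink_verts_def)
  ultimately show ?thesis by (simp add: sinks_eq_card_sink_verts card_Un_disjoint)
qed

lemma colorings_disj_union_bij:
  "bij_betw (\<lambda>\<kappa>. (restrict \<kappa> (sp_verts P1), restrict \<kappa> (sp_verts P2)))
    (colorings (disj_union P1 P2)) (colorings P1 \<times> colorings P2)"
proof -
  define merge where "merge = (\<lambda>(\<kappa>1, \<kappa>2) v. if v \<in> sp_verts P1 then \<kappa>1 v else (\<kappa>2 v :: int))"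
  have coloring_iff: "\<kappa> \<in> colorings (disj_union P1 P2) \<longleftrightarrow> \<kappa> \<in> sp_verts P1 \<union> sp_verts P2 \<rightarrow>\<^sub>E UNIV \<and>
      restrict \<kappa> (sp_verts P1) \<in> colorings P1 \<and> restrict \<kappa> (sp_verts P2) \<in> colorings P2" for \<kappa>
    by (auto simp: restrict_in_colorings poset1 poset2 proper_col_disj_union preserves_disj_union
        disjoint_edges colorings_def[of "disj_union P1 P2"])
  have restrict_merge: "restrict (merge (\<kappa>1, \<kappa>2)) (sp_verts P1) = \<kappa>1"
    "restrict (merge (\<kappa>1, \<kappa>2)) (sp_verts P2) = \<kappa>2"
    if "\<kappa>1 \<in> colorings P1" and "\<kappa>2 \<in> colorings P2" for \<kappa>1 \<kappa>2
    using that disjoint_verts by (auto simp: merge_def colorings_def PiE_def extensional_def fun_eq_iff)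
  show ?thesis
  proof (rule bij_betw_byWitness[where f' = merge])
    show "\<forall>\<kappa>\<in>colorings (disj_union P1 P2).
        merge (restrict \<kappa> (sp_verts P1), restrict \<kappa> (sp_verts P2)) = \<kappa>"
      by (auto simp: merge_def colorings_def PiE_def extensional_def fun_eq_iff)
    show "\<forall>\<kappa>\<in>colorings P1 \<times> colorings P2.
        (restrict (merge \<kappa>) (sp_verts P1), restrict (merge \<kappa>) (sp_verts P2)) = \<kappa>"
      using restrict_merge by auto
    show "(\<lambda>\<kappa>. (restrict \<kappa> (sp_verts P1), restrict \<kappa> (sp_verts P2))) ` colorings (disj_union P1 P2)
        \<subseteq> colorings P1 \<times> colorings P2"
      using coloring_iff by auto
    show "merge ` (colorings P1 \<times> colorings P2) \<subseteq> colorings (disj_union P1 P2)"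
    proof clarify
      fix \<kappa>1 \<kappa>2 assume "\<kappa>1 \<in> colorings P1" and "\<kappa>2 \<in> colorings P2"
      moreover have "merge (\<kappa>1, \<kappa>2) \<in> sp_verts P1 \<union> sp_verts P2 \<rightarrow>\<^sub>E UNIV"
        using calculation by (auto simp: merge_def colorings_def PiE_def extensional_def)
      ultimately show "merge (\<kappa>1, \<kappa>2) \<in> colorings (disj_union P1 P2)"
        using coloring_iff restrict_merge by simp
    qed
  qed
qed

lemma Ysp_disj_union: "Ysp (disj_union P1 P2) = ps_mult (Ysp P1) (Ysp P2)"
proof
  fix m
  have finite: "finite (sp_verts P1)" "finite (sp_verts P2)"
    using poset1 poset2 by (simp_all add: signed_poset_def)
  have "card {\<kappa> \<in> colorings (disj_union P1 P2). monomial (sp_verts (disj_union P1 P2)) \<kappa> = m} =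
      card {p \<in> colorings P1 \<times> colorings P2. monomial (sp_verts P1) (fst p) + monomial (sp_verts P2) (snd p) = m}"
    by (rule bij_betw_card_fibres[OF colorings_disj_union_bij])
      (simp add: monomial_restrict monomial_Un finite disjoint_verts)
  also have "\<dots> = (\<Sum>n\<in>{n. n \<subseteq># m}. card {\<kappa> \<in> colorings P1. monomial (sp_verts P1) \<kappa> = n} *
      card {\<kappa> \<in> colorings P2. monomial (sp_verts P2) \<kappa> = m - n})"
    by (rule card_additive_fibre_eq_convolution) (simp_all add: finite_colorings_with_monomial finite)
  finally show "Ysp (disj_union P1 P2) m = ps_mult (Ysp P1) (Ysp P2) m"
    by (simp add: Ysp_eq_card_colorings ps_mult_def)
qed

end

section \<open>Relabelling\<close>

definition relabel :: "('v \<Rightarrow> 'w) \<Rightarrow> ('e \<Rightarrow> 'f) \<Rightarrow> ('v, 'e) spos \<Rightarrow> ('w, 'f) spos" where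
  "relabel h k P = \<lparr>sp_verts = h ` sp_verts P, sp_edges = k ` sp_edges P,
     sp_ends = (\<lambda>e. map_prod h h (sp_ends P (inv k e))), sp_pos = (\<lambda>e. sp_pos P (inv k e)),
     sp_arr = (\<lambda>e. sp_arr P (inv k e))\<rparr>"

context
  fixes h :: "'v \<Rightarrow> 'w" and k :: "'e \<Rightarrow> 'f"
  assumes inj_h: "inj h" and inj_k: "inj k"
begin

lemma relabel_simps [simp]:
  "sp_verts (relabel h k P) = h ` sp_verts P"
  "sp_edges (relabel h k P) = k ` sp_edges P"
  "endpt (relabel h k P) (k e) b = h (endpt P e b)"
  "sgnval (relabel h k P) (k e) = sgnval P e"
  "sp_arr (relabel h k P) (k e) = sp_arr P e"
  using inj_k by (simp_all add: relabel_def endpt_def sgnval_def map_prod_def split_beta)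

lemma proper_col_relabel: "proper_col (relabel h k P) \<kappa> \<longleftrightarrow> proper_col P (\<kappa> \<circ> h)"
  by (simp add: proper_col_def)

lemma preserves_relabel: "preserves (relabel h k P) \<kappa> \<longleftrightarrow> preserves P (\<kappa> \<circ> h)"
  by (simp add: preserves_def)

lemma sinks_relabel: "sinks (relabel h k P) = sinks P"
proof -
  have "sink_verts (relabel h k P) = h ` sink_verts P"
    using inj_h by (auto simp: sink_verts_def inj_eq)
  then show ?thesis
    using inj_h by (simp add: sinks_eq_card_sink_verts card_image inj_on_subset)
qed

lemma signed_poset_relabel:
  assumes "signed_poset P"
  shows "signed_poset (relabel h k P)"
proof -
  have "\<not> is_cycle (relabel h k P) w" for w
  proof
    assume cycle: "is_cycle (relabel h k P) w"
    have "is_cycle P (map (apfst (inv k)) w)"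
    proof (rule is_cycle_map[OF cycle])
      fix e b assume "(e, b) \<in> set w"
      then have "e \<in> k ` sp_edges P" using cycle by (auto simp: is_cycle_def closed_walk_def)
      then show "inv k e \<in> sp_edges P \<and> sp_arr P (inv k e) = sp_arr (relabel h k P) e \<and>
          (\<forall>c. endpt P (inv k e) c = inv h (endpt (relabel h k P) e c))"
        using inj_h inj_k by auto
    qed
    then show False using assms by (simp add: signed_poset_def)
  qed
  then show ?thesis
    using assms by (auto simp: signed_poset_def relabel_def map_prod_def split_beta inj_k)
qed

lemma colorings_relabel_bij:
  assumes "signed_poset P"
  shows "bij_betw (\<lambda>\<kappa>. restrict (\<kappa> \<circ> h) (sp_verts P)) (colorings (relabel h k P)) (colorings P)"
proof -
  define transport where "transport \<kappa> = restrict (\<kappa> \<circ> inv h) (h ` sp_verts P)" for \<kappa> :: "'v \<Rightarrow> int"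
  have coloring_iff: "\<kappa> \<in> colorings (relabel h k P) \<longleftrightarrow>
      \<kappa> \<in> h ` sp_verts P \<rightarrow>\<^sub>E UNIV \<and> restrict (\<kappa> \<circ> h) (sp_verts P) \<in> colorings P" for \<kappa>
    by (simp add: restrict_in_colorings assms proper_col_relabel preserves_relabel
        colorings_def[of "relabel h k P"])
  have restrict_transport: "restrict (transport \<kappa> \<circ> h) (sp_verts P) = \<kappa>" if "\<kappa> \<in> colorings P" for \<kappa>
    using that inj_h by (auto simp: transport_def colorings_def PiE_def extensional_def fun_eq_iff)
  show ?thesis
  proof (rule bij_betw_byWitness[where f' = transport])
    show "\<forall>\<kappa>\<in>colorings (relabel h k P). transport (restrict (\<kappa> \<circ> h) (sp_verts P)) = \<kappa>"
      using inj_h by (auto simp: transport_def colorings_def PiE_def extensional_def fun_eq_iff)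
    show "\<forall>\<kappa>\<in>colorings P. restrict (transport \<kappa> \<circ> h) (sp_verts P) = \<kappa>"
      using restrict_transport by blast
    show "(\<lambda>\<kappa>. restrict (\<kappa> \<circ> h) (sp_verts P)) ` colorings (relabel h k P) \<subseteq> colorings P"
      using coloring_iff by blast
    show "transport ` colorings P \<subseteq> colorings (relabel h k P)"
      using coloring_iff restrict_transport by (auto simp: transport_def)
  qed
qed

lemma Ysp_relabel:
  assumes "signed_poset P"
  shows "Ysp (relabel h k P) = Ysp P"
proof
  fix m
  have finite: "finite (sp_verts P)" using assms by (simp add: signed_poset_def)
  have "monomial (h ` sp_verts P) \<kappa> = monomial (sp_verts P) (restrict (\<kappa> \<circ> h) (sp_verts P))" for \<kappa>
    using inj_h finite by (simp add: monomial_image inj_on_subset monomial_restrict)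
  then show "Ysp (relabel h k P) m = Ysp P m"
    unfolding Ysp_eq_card_colorings
    by (subst bij_betw_card_fibres[OF colorings_relabel_bij[OF assms]]) simp_all
qed

end

section \<open>Products in \<open>YY\<close>\<close>

text \<open>\<open>YY\<close> only contains posets labelled by \<open>nat\<close>, so a product of two of them is realised
  by putting the first on even and the second on odd labels.\<close>

abbreviation even_copy :: "(nat, nat) spos \<Rightarrow> (nat, nat) spos" where
  "even_copy \<equiv> relabel (\<lambda>v. 2 * v) (\<lambda>e. 2 * e)"

abbreviation odd_copy :: "(nat, nat) spos \<Rightarrow> (nat, nat) spos" where
  "odd_copy \<equiv> relabel (\<lambda>v. 2 * v + 1) (\<lambda>e. 2 * e + 1)"

definition disj_sum :: "(nat, nat) spos \<Rightarrow> (nat, nat) spos \<Rightarrow> (nat, nat) spos" where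
  "disj_sum P Q = disj_union (even_copy P) (odd_copy Q)"

lemma inj_even_odd: "inj (\<lambda>n::nat. 2 * n)" "inj (\<lambda>n::nat. 2 * n + 1)"
  by (auto intro: injI)

context
  fixes P Q :: "(nat, nat) spos"
  assumes poset_P: "signed_poset P" and poset_Q: "signed_poset Q"
begin

lemma disj_sum_summands:
  "signed_poset (even_copy P)" "signed_poset (odd_copy Q)"
  "sp_verts (even_copy P) \<inter> sp_verts (odd_copy Q) = {}"
  "sp_edges (even_copy P) \<inter> sp_edges (odd_copy Q) = {}"
proof -
  show "signed_poset (even_copy P)" "signed_poset (odd_copy Q)"
    using poset_P poset_Q inj_even_odd by (simp_all add: signed_poset_relabel)
  show "sp_verts (even_copy P) \<inter> sp_verts (odd_copy Q) = {}"
    "sp_edges (even_copy P) \<inter> sp_edges (odd_copy Q) = {}"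
    by (auto simp: relabel_def) presburger+
qed

lemma signed_poset_disj_sum: "signed_poset (disj_sum P Q)"
  unfolding disj_sum_def by (rule signed_poset_disj_union[OF disj_sum_summands])

lemma Ysp_disj_sum: "Ysp (disj_sum P Q) = ps_mult (Ysp P) (Ysp Q)"
proof -
  have "Ysp (disj_sum P Q) = ps_mult (Ysp (even_copy P)) (Ysp (odd_copy Q))"
    unfolding disj_sum_def by (rule Ysp_disj_union[OF disj_sum_summands])
  then show ?thesis using poset_P poset_Q inj_even_odd by (simp add: Ysp_relabel)
qed

lemma sinks_disj_sum: "sinks (disj_sum P Q) = sinks P + sinks Q"
proof -
  have "sinks (disj_sum P Q) = sinks (even_copy P) + sinks (odd_copy Q)"
    unfolding disj_sum_def by (rule sinks_disj_union[OF disj_sum_summands])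
  then show ?thesis using inj_even_odd by (simp add: sinks_relabel)
qed

end

lemma ps_mult_sum_list_left: "ps_mult (\<lambda>m. \<Sum>x\<leftarrow>xs. f x m) g = (\<lambda>m. \<Sum>x\<leftarrow>xs. ps_mult (f x) g m)"
  by (induction xs) (simp_all add: ps_mult_def sum.distrib algebra_simps fun_eq_iff)

lemma ps_mult_sum_list_right: "ps_mult f (\<lambda>m. \<Sum>x\<leftarrow>xs. g x m) = (\<lambda>m. \<Sum>x\<leftarrow>xs. ps_mult f (g x) m)"
  by (induction xs) (simp_all add: ps_mult_def sum.distrib algebra_simps fun_eq_iff)

lemma ps_mult_scale: "ps_mult (\<lambda>m. c * f m) (\<lambda>m. d * g m) = (\<lambda>m. c * d * ps_mult f g m)"
  by (simp add: ps_mult_def sum_distrib_left ac_simps)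

definition lincomb :: "(rat \<times> (nat, nat) spos) list \<Rightarrow> fps_Z" where
  "lincomb cs = (\<lambda>m. \<Sum>(c, P)\<leftarrow>cs. c * Ysp P m)"

definition term_products :: "(rat \<times> (nat, nat) spos) list \<Rightarrow> (rat \<times> (nat, nat) spos) list \<Rightarrow>
    (rat \<times> (nat, nat) spos) list" where
  "term_products cs ds = [(c * d, disj_sum P Q). (c, P) \<leftarrow> cs, (d, Q) \<leftarrow> ds]"

lemma mem_YY_iff: "f \<in> YY \<longleftrightarrow> (\<exists>cs. (\<forall>(c, P)\<in>set cs. signed_poset P) \<and> f = lincomb cs)"
  by (simp add: YY_def lincomb_def)

lemma lincomb_term_products:
  "lincomb (term_products cs ds) = (\<lambda>m. \<Sum>(c, P)\<leftarrow>cs. \<Sum>(d, Q)\<leftarrow>ds. c * d * Ysp (disj_sum P Q) m)"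
  by (induction cs) (simp_all add: lincomb_def term_products_def case_prod_unfold comp_def fun_eq_iff)

lemma signed_posets_term_products:
  "\<forall>(c, P)\<in>set cs. signed_poset P \<Longrightarrow> \<forall>(d, Q)\<in>set ds. signed_poset Q \<Longrightarrow>
    \<forall>(e, R)\<in>set (term_products cs ds). signed_poset R"
  by (fastforce simp: term_products_def intro: signed_poset_disj_sum)

lemma ps_mult_lincomb:
  assumes "\<forall>(c, P)\<in>set cs. signed_poset P" and "\<forall>(d, Q)\<in>set ds. signed_poset Q"
  shows "ps_mult (lincomb cs) (lincomb ds) = lincomb (term_products cs ds)"
proof -
  have "ps_mult (lincomb cs) (lincomb ds) =
      (\<lambda>m. \<Sum>(c, P)\<leftarrow>cs. \<Sum>(d, Q)\<leftarrow>ds. c * d * ps_mult (Ysp P) (Ysp Q) m)"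
    unfolding lincomb_def
    by (simp add: ps_mult_sum_list_left ps_mult_sum_list_right case_prod_unfold ps_mult_scale)
  also have "\<dots> = (\<lambda>m. \<Sum>(c, P)\<leftarrow>cs. \<Sum>(d, Q)\<leftarrow>ds. c * d * Ysp (disj_sum P Q) m)"
    using assms by (fastforce intro!: ext arg_cong[where f = sum_list] map_cong simp: Ysp_disj_sum)
  finally show ?thesis by (simp add: lincomb_term_products)
qed

definition sink_polynomial :: "(rat \<times> (nat, nat) spos) list \<Rightarrow> rat poly" where
  "sink_polynomial cs = (\<Sum>(c, P)\<leftarrow>cs. smult c (monom 1 (sinks P)))"

lemma phi_lincomb:
  assumes "phi_spec \<phi>" and "\<forall>(c, P)\<in>set cs. signed_poset P"
  shows "\<phi> (lincomb cs) = sink_polynomial cs"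
  using assms(2)
proof (induction cs)
  case Nil
  have "lincomb [] \<in> YY" unfolding mem_YY_iff by (intro exI[of _ "[]"]) simp
  then have "\<phi> (\<lambda>m. 0 * lincomb [] m + 0 * lincomb [] m) = smult 0 (\<phi> (lincomb [])) + smult 0 (\<phi> (lincomb []))"
    using assms(1) unfolding phi_spec_def by blast
  then show ?case by (simp add: lincomb_def sink_polynomial_def)
next
  case (Cons t cs)
  obtain c P where t: "t = (c, P)" by fastforce
  with Cons.prems have poset: "signed_poset P" and posets: "\<forall>(c, P)\<in>set cs. signed_poset P" by auto
  have "Ysp P = lincomb [(1, P)]" by (simp add: lincomb_def)
  then have "Ysp P \<in> YY" unfolding mem_YY_iff using poset by (intro exI[of _ "[(1, P)]"]) simp
  moreover have "lincomb cs \<in> YY" using posets mem_YY_iff by blast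
  ultimately have "\<phi> (\<lambda>m. c * Ysp P m + 1 * lincomb cs m) = smult c (\<phi> (Ysp P)) + smult 1 (\<phi> (lincomb cs))"
    using assms(1) unfolding phi_spec_def by blast
  moreover have "\<phi> (Ysp P) = monom 1 (sinks P)" using assms(1) poset by (simp add: phi_spec_def)
  ultimately show ?case using Cons.IH[OF posets] by (simp add: t lincomb_def sink_polynomial_def)
qed

lemma sink_polynomial_term_products:
  assumes "\<forall>(c, P)\<in>set cs. signed_poset P" and "\<forall>(d, Q)\<in>set ds. signed_poset Q"
  shows "sink_polynomial (term_products cs ds) = sink_polynomial cs * sink_polynomial ds"
proof -
  have "sink_polynomial (term_products cs ds) =
      (\<Sum>(c, P)\<leftarrow>cs. \<Sum>(d, Q)\<leftarrow>ds. smult (c * d) (monom 1 (sinks (disj_sum P Q))))"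
    by (induction cs) (simp_all add: sink_polynomial_def term_products_def case_prod_unfold comp_def)
  also have "\<dots> = (\<Sum>(c, P)\<leftarrow>cs. \<Sum>(d, Q)\<leftarrow>ds. smult c (monom 1 (sinks P)) * smult d (monom 1 (sinks Q)))"
  proof -
    have "smult (c * d) (monom 1 (sinks (disj_sum P Q))) = smult c (monom 1 (sinks P)) * smult d (monom 1 (sinks Q))"
      if "signed_poset P" and "signed_poset Q" for c d :: rat and P Q
      using that by (simp add: sinks_disj_sum mult_monom mult.commute)
    then show ?thesis using assms by (fastforce intro!: arg_cong[where f = sum_list] map_cong)
  qed
  also have "\<dots> = sink_polynomial cs * sink_polynomial ds"
    unfolding sink_polynomial_def sum_list_mult_sum_list by (simp add: case_prod_unfold)
  finally show ?thesis .
qed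

lemma phi_ps_mult_lincomb:
  assumes phi: "phi_spec \<phi>"
    and cs: "\<forall>(c, P)\<in>set cs. signed_poset P" and ds: "\<forall>(d, Q)\<in>set ds. signed_poset Q"
  shows "\<phi> (ps_mult (lincomb cs) (lincomb ds)) = \<phi> (lincomb cs) * \<phi> (lincomb ds)"
proof -
  have "\<phi> (ps_mult (lincomb cs) (lincomb ds)) = \<phi> (lincomb (term_products cs ds))"
    by (simp only: ps_mult_lincomb[OF cs ds])
  also have "\<dots> = sink_polynomial (term_products cs ds)"
    by (rule phi_lincomb[OF phi signed_posets_term_products[OF cs ds]])
  also have "\<dots> = sink_polynomial cs * sink_polynomial ds"
    by (rule sink_polynomial_term_products[OF cs ds])
  also have "\<dots> = \<phi> (lincomb cs) * \<phi> (lincomb ds)"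
    by (simp only: phi_lincomb[OF phi cs] phi_lincomb[OF phi ds])
  finally show ?thesis .
qed

theorem mainTheorem9:
  shows "(\<forall>P1 P2 :: ('v, 'e) spos. signed_poset P1 \<and> signed_poset P2 \<and>
            sp_verts P1 \<inter> sp_verts P2 = {} \<and> sp_edges P1 \<inter> sp_edges P2 = {} \<longrightarrow>
            Ysp (disj_union P1 P2) = ps_mult (Ysp P1) (Ysp P2)) \<and>
         (\<forall>f\<in>YY. \<forall>g\<in>YY. ps_mult f g \<in> YY) \<and>
         (\<forall>\<phi>. phi_spec \<phi> \<longrightarrow> (\<forall>f\<in>YY. \<forall>g\<in>YY. \<phi> (ps_mult f g) = \<phi> f * \<phi> g))"
proof (intro conjI allI impI ballI)
  fix P1 P2 :: "('v, 'e) spos"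
  assume "signed_poset P1 \<and> signed_poset P2 \<and>
    sp_verts P1 \<inter> sp_verts P2 = {} \<and> sp_edges P1 \<inter> sp_edges P2 = {}"
  then show "Ysp (disj_union P1 P2) = ps_mult (Ysp P1) (Ysp P2)"
    by (simp add: Ysp_disj_union)
next
  fix f g assume "f \<in> YY" and "g \<in> YY"
  then obtain cs ds where "\<forall>(c, P)\<in>set cs. signed_poset P" "f = lincomb cs"
    and "\<forall>(d, Q)\<in>set ds. signed_poset Q" "g = lincomb ds"
    unfolding mem_YY_iff by blast
  then show "ps_mult f g \<in> YY"
    unfolding mem_YY_iff using ps_mult_lincomb signed_posets_term_products by blast
next
  fix \<phi> f g assume phi: "phi_spec \<phi>" and "f \<in> YY" and "g \<in> YY"
  then obtain cs ds where "\<forall>(c, P)\<in>set cs. signed_poset P" "f = lincomb cs"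
    and "\<forall>(d, Q)\<in>set ds. signed_poset Q" "g = lincomb ds"
    unfolding mem_YY_iff by blast
  then show "\<phi> (ps_mult f g) = \<phi> f * \<phi> g"
    using phi_ps_mult_lincomb[OF phi] by simp
qed

end
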